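(* Let $n\ge 1$, $a<b$, and let $f:[a,b]\to\mathbb{R}$ be $n$-times differentiable on $[a,b]$. Put $\mathfrak{T}_f(a)=T_{n-1}(f,b)(a)-f(a)$. If $$\left(\frac{f^{(n)}(a)(a-b)^n}{n!}+\mathfrak{T}_f(a)\right)\left(\frac{f^{(n)}(b)(a-b)^n}{n!}+\mathfrak{T}_f(a)\right)\geq 0,$$ then there exists $\eta\in(a,b]$ such that $$\frac{f(\eta)-f(a)}{\eta-a}=\sum_{i=1}^n\frac{(-1)^{i+1}}{i!}(\eta-a)^{i-1}f^{(i)}(\eta).$$
   Context: $n$-times differentiable on $[a,b]$ means $n$-times differentiable on $(a,b)$ with the corresponding one-sided derivatives existing at the endpoints. $T_m(h,x_0)(x)=\sum_{k=0}^m \frac{h^{(k)}(x_0)}{k!}(x-x_0)^k$ denotes the $m$-th Taylor polynomial of $h$ at $x_0$, evaluated at $x$. *)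

theory Defs
  imports Complex_Main
begin

text \<open>m-th Taylor polynomial of h (given by its derivative family D, D k = h^(k))
  at x0, evaluated at x.\<close>
definition taylor_poly :: "(nat \<Rightarrow> real \<Rightarrow> real) \<Rightarrow> nat \<Rightarrow> real \<Rightarrow> real \<Rightarrow> real" where
  "taylor_poly D m x0 x = (\<Sum>k\<le>m. D k x0 / fact k * (x - x0) ^ k)"

end

theory Submission
  imports Defs "HOL-Analysis.Derivative" "HOL-Library.Landau_Symbols"
begin

text \<open>Write n = m + 1 and let K(x) = T_m(f,x)(a) + f^(n)(a) (a - x)^n / n! - f(a),
  F(x) = T_n(f,x)(a) - f(a) and H(x) = K(x) / (x - a)^n. Comparing f with its Taylor polynomial at a
  gives the Peano estimate K(x) = o((x - a)^n) as x \<rightarrow> a+, so H extends continuously by H(a) = 0,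
  and a direct computation gives H'(x) = -n F(x) / (x - a)^(n+1). The hypothesis says
  K(b) F(b) \<ge> 0, i.e. H(b) H'(b) \<le> 0, and this forces H' to vanish at some \<eta> in (a, b]: at b itself,
  by Rolle's theorem if H(b) = 0, and otherwise because H moves away from 0 as it approaches b,
  so by the intermediate value theorem it takes the value H(b) once more before b.
  A zero of F is exactly the claimed identity.\<close>

lemma taylor_poly_Suc:
  "taylor_poly D (Suc m) x y = taylor_poly D m x y + D (Suc m) x / fact (Suc m) * (y - x) ^ Suc m"
  by (simp add: taylor_poly_def)

lemma has_real_derivative_taylor_poly_center:
  fixes D :: "nat \<Rightarrow> real \<Rightarrow> real"
  assumes "\<And>k. k \<le> m \<Longrightarrow> (D k has_real_derivative D (Suc k) t) (at t within S)"
  shows "((\<lambda>x. taylor_poly D m x y) has_real_derivative D (Suc m) t * (y - t) ^ m / fact m)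
           (at t within S)"
  using assms
proof (induction m)
  case 0
  then show ?case by (simp add: taylor_poly_def)
next
  case (Suc m)
  have "((\<lambda>x. taylor_poly D m x y + D (Suc m) x / fact (Suc m) * (y - x) ^ Suc m) has_real_derivative
      D (Suc (Suc m)) t * (y - t) ^ Suc m / fact (Suc m)) (at t within S)"
    by (rule DERIV_cong[OF DERIV_add[OF Suc.IH DERIV_mult[OF DERIV_cdivide[OF Suc.prems]
            DERIV_power_Suc[OF DERIV_diff[OF DERIV_const DERIV_ident]]]]])
      (auto simp: divide_simps intro: Suc.prems)
  then show ?case
    by (simp add: taylor_poly_def)
qed

text \<open>The k-th derivative of the degree-n polynomial with Taylor coefficients c at a; for k > n
  this is the constant c k rather than 0.\<close>
definition taylor_poly_deriv :: "(nat \<Rightarrow> real) \<Rightarrow> nat \<Rightarrow> real \<Rightarrow> nat \<Rightarrow> real \<Rightarrow> real" where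
  "taylor_poly_deriv c n a k x = (\<Sum>j\<le>n - k. c (k + j) / fact j * (x - a) ^ j)"

lemma has_real_derivative_taylor_poly_deriv:
  assumes "k < n"
  shows "(taylor_poly_deriv c n a k has_real_derivative taylor_poly_deriv c n a (Suc k) x) (at x within S)"
proof -
  obtain N where N: "n - k = Suc N" "n - Suc k = N"
    using assms by (metis Suc_diff_Suc)
  have "taylor_poly_deriv c n a k = (\<lambda>x. c k + (\<Sum>j\<le>N. c (Suc k + j) / fact (Suc j) * (x - a) ^ Suc j))"
    unfolding taylor_poly_deriv_def fun_eq_iff N(1) by (subst sum.atMost_Suc_shift) (simp del: fact_Suc)
  moreover have "((\<lambda>x. c k + (\<Sum>j\<le>N. c (Suc k + j) / fact (Suc j) * (x - a) ^ Suc j))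
      has_real_derivative (\<Sum>j\<le>N. c (Suc k + j) / fact j * (x - a) ^ j)) (at x within S)"
    by (rule DERIV_cong[OF DERIV_add[OF DERIV_const DERIV_sum[OF DERIV_cmult[OF
            DERIV_power_Suc[OF DERIV_diff[OF DERIV_ident DERIV_const]]]]]])
      (auto intro!: sum.cong simp: divide_simps)
  ultimately show ?thesis
    by (simp add: taylor_poly_deriv_def N(2))
qed

lemma taylor_poly_deriv_center: "k \<le> n \<Longrightarrow> taylor_poly_deriv c n a k a = c k"
  unfolding taylor_poly_deriv_def by (cases "n - k") (simp_all add: sum.atMost_Suc_shift)

lemma taylor_poly_deriv_top: "taylor_poly_deriv c n a n x = c n"
  by (simp add: taylor_poly_deriv_def)

lemma taylor_poly_at_center: "taylor_poly D m x x = D 0 x"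
  by (simp add: taylor_poly_def atMost_atLeast0 sum.atLeast_Suc_atMost zero_power
      flip: sum.atLeast_Suc_atMost)

lemma taylor_poly_of_taylor_poly_deriv:
  "taylor_poly (taylor_poly_deriv c (Suc m) a) m x a = c 0 - c (Suc m) / fact (Suc m) * (a - x) ^ Suc m"
proof -
  define \<phi> where "\<phi> y = taylor_poly (taylor_poly_deriv c (Suc m) a) m y a
    + c (Suc m) / fact (Suc m) * (a - y) ^ Suc m" for y
  have "(\<phi> has_real_derivative 0) (at y)" for y
    unfolding \<phi>_def
    by (rule DERIV_cong[OF DERIV_add[OF has_real_derivative_taylor_poly_center
            DERIV_cmult[OF DERIV_power_Suc[OF DERIV_diff[OF DERIV_const DERIV_ident]]]]])
      (auto intro: has_real_derivative_taylor_poly_deriv simp: taylor_poly_deriv_top divide_simps)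
  then have "\<phi> x = \<phi> a"
    using DERIV_isconst_all by blast
  then show ?thesis
    by (simp add: \<phi>_def taylor_poly_at_center taylor_poly_deriv_center)
qed

lemma smallo_at_right_of_deriv_zero:
  fixes g :: "real \<Rightarrow> real"
  assumes "a < b" and "g a = 0" and "(g has_real_derivative 0) (at a within {a..b})"
  shows "g \<in> o[at_right a](\<lambda>x. x - a)"
proof (rule smalloI_tendsto)
  show "((\<lambda>x. g x / (x - a)) \<longlongrightarrow> 0) (at_right a)"
    using assms by (simp add: has_field_derivative_iff at_within_Icc_at_right)
  show "\<forall>\<^sub>F x in at_right a. x - a \<noteq> 0"
    using eventually_at_right_less[of a] by eventually_elim simp
qed

lemma smallo_at_right_of_deriv_smallo:
  fixes g g' :: "real \<Rightarrow> real"
  assumes "a < b" and "g a = 0"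
    and deriv: "\<And>t. t \<in> {a..b} \<Longrightarrow> (g has_real_derivative g' t) (at t within {a..b})"
    and small: "g' \<in> o[at_right a](\<lambda>x. (x - a) ^ j)"
  shows "g \<in> o[at_right a](\<lambda>x. (x - a) ^ Suc j)"
proof (rule landau_o.smallI)
  fix e :: real
  assume "e > 0"
  obtain b' where "b' > a" and b': "\<And>z. a < z \<Longrightarrow> z < b' \<Longrightarrow> \<bar>g' z\<bar> \<le> e * \<bar>(z - a) ^ j\<bar>"
    using landau_o.smallD[OF small \<open>e > 0\<close>] by (auto simp: eventually_at_right_field)
  have "\<bar>g y\<bar> \<le> e * \<bar>(y - a) ^ Suc j\<bar>" if "a < y" "y < min b b'" for y
  proof -
    obtain z where z: "z \<in> {a<..<y}" and mvt: "g y - g a = g' z * (y - a)"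
      using mvt_simple[of a y g "\<lambda>t v. g' t * v"] \<open>a < y\<close> \<open>y < min b b'\<close>
        deriv[THEN DERIV_subset, of _ "{a..y}"] by (auto simp: has_field_derivative_def)
    have "\<bar>g y\<bar> = \<bar>g' z\<bar> * (y - a)"
      using mvt \<open>g a = 0\<close> \<open>a < y\<close> by (simp add: abs_mult)
    also have "\<dots> \<le> e * (z - a) ^ j * (y - a)"
      using b'[of z] z that \<open>a < y\<close> by (intro mult_right_mono) (auto simp: power_abs)
    also have "\<dots> \<le> e * (y - a) ^ j * (y - a)"
      using z \<open>e > 0\<close> \<open>a < y\<close> by (intro mult_right_mono mult_left_mono power_mono) auto
    finally show ?thesis
      using \<open>a < y\<close> by (simp add: power_abs ac_simps)
  qed
  then show "\<forall>\<^sub>F x in at_right a. norm (g x) \<le> e * norm ((x - a) ^ Suc j)"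
    using \<open>a < b\<close> \<open>b' > a\<close> by (auto simp: eventually_at_right_field intro!: exI[of _ "min b b'"])
qed

lemma taylor_poly_deriv_approximation:
  fixes D :: "nat \<Rightarrow> real \<Rightarrow> real"
  assumes "a < b"
    and diff: "\<And>k t. k \<le> m \<Longrightarrow> t \<in> {a..b} \<Longrightarrow> (D k has_real_derivative D (Suc k) t) (at t within {a..b})"
    and "k \<le> m"
  shows "(\<lambda>x. D k x - taylor_poly_deriv (\<lambda>i. D i a) (Suc m) a k x)
           \<in> o[at_right a](\<lambda>x. (x - a) ^ (Suc m - k))"
  using \<open>k \<le> m\<close>
proof (induction k rule: inc_induct)
  case base
  have "((\<lambda>x. D m x - taylor_poly_deriv (\<lambda>i. D i a) (Suc m) a m x) has_real_derivative
      D (Suc m) a - taylor_poly_deriv (\<lambda>i. D i a) (Suc m) a (Suc m) a) (at a within {a..b})"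
    using \<open>a < b\<close> by (intro DERIV_diff diff has_real_derivative_taylor_poly_deriv) auto
  then have "(\<lambda>x. D m x - taylor_poly_deriv (\<lambda>i. D i a) (Suc m) a m x) \<in> o[at_right a](\<lambda>x. x - a)"
    by (intro smallo_at_right_of_deriv_zero[OF \<open>a < b\<close>])
      (simp_all add: taylor_poly_deriv_top taylor_poly_deriv_center)
  then show ?case
    by (simp add: Suc_diff_le)
next
  case (step k)
  have "Suc m - k = Suc (Suc m - Suc k)"
    using step.hyps by simp
  then show ?case
    using step by (simp only:) (intro smallo_at_right_of_deriv_smallo[OF \<open>a < b\<close>];
      auto intro!: DERIV_diff diff has_real_derivative_taylor_poly_deriv simp: taylor_poly_deriv_center)
qed

definition frozen_taylor_error :: "(nat \<Rightarrow> real \<Rightarrow> real) \<Rightarrow> nat \<Rightarrow> real \<Rightarrow> real \<Rightarrow> real" where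
  "frozen_taylor_error D m a x = taylor_poly D m x a + D (Suc m) a / fact (Suc m) * (a - x) ^ Suc m - D 0 a"

lemma frozen_taylor_error_smallo:
  fixes D :: "nat \<Rightarrow> real \<Rightarrow> real"
  assumes "a < b"
    and diff: "\<And>k t. k \<le> m \<Longrightarrow> t \<in> {a..b} \<Longrightarrow> (D k has_real_derivative D (Suc k) t) (at t within {a..b})"
  shows "frozen_taylor_error D m a \<in> o[at_right a](\<lambda>x. (x - a) ^ Suc m)"
proof -
  define P where "P = taylor_poly_deriv (\<lambda>i. D i a) (Suc m) a"
  have "frozen_taylor_error D m a x = taylor_poly D m x a - taylor_poly P m x a" for x
    using taylor_poly_of_taylor_poly_deriv[of "\<lambda>i. D i a" m a x]
    by (simp add: frozen_taylor_error_def P_def)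
  then have expand: "frozen_taylor_error D m a = (\<lambda>x. \<Sum>k\<le>m. (D k x - P k x) * ((a - x) ^ k / fact k))"
    by (auto simp: taylor_poly_def fun_eq_iff algebra_simps diff_divide_distrib sum_subtractf[symmetric])
  have "(\<lambda>x. (D k x - P k x) * ((a - x) ^ k / fact k)) \<in> o[at_right a](\<lambda>x. (x - a) ^ Suc m)"
    if "k \<le> m" for k
  proof -
    have "(\<lambda>x. (a - x) ^ k / fact k) \<in> O[at_right a](\<lambda>x. (x - a) ^ k)"
    proof (intro landau_o.bigI[of 1] always_eventually allI)
      show "norm ((a - x) ^ k / fact k) \<le> 1 * norm ((x - a) ^ k)" for x
        using fact_ge_1[of k, where 'a=real]
        by (simp add: power_abs abs_minus_commute divide_le_eq mult_le_cancel_left1)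
    qed simp
    from landau_o.small_big_mult[OF taylor_poly_deriv_approximation[where D=D, OF assms that] this]
    show ?thesis
      using that by (simp add: P_def flip: power_add)
  qed
  then show ?thesis
    unfolding expand by (intro big_sum_in_smallo) simp
qed

lemma has_real_derivative_frozen_taylor_error_quotient:
  fixes D :: "nat \<Rightarrow> real \<Rightarrow> real"
  assumes diff: "\<And>k. k \<le> m \<Longrightarrow> (D k has_real_derivative D (Suc k) t) (at t within S)"
    and "t \<noteq> a"
  shows "((\<lambda>x. frozen_taylor_error D m a x / (x - a) ^ Suc m) has_real_derivative
           - real (Suc m) * (taylor_poly D (Suc m) t a - D 0 a) / (t - a) ^ Suc (Suc m))
         (at t within S)"
proof -
  define c where "c = D (Suc m) t - D (Suc m) a"
  have dK: "(frozen_taylor_error D m a has_real_derivative c * (a - t) ^ m / fact m) (at t within S)"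
    unfolding frozen_taylor_error_def c_def
    by (rule DERIV_cong[OF DERIV_diff[OF DERIV_add[OF
            has_real_derivative_taylor_poly_center[where D=D, OF diff]
            DERIV_cmult[OF DERIV_power_Suc[OF DERIV_diff[OF DERIV_const DERIV_ident]]]] DERIV_const]])
      (simp_all add: divide_simps left_diff_distrib)
  have dP: "((\<lambda>x. (x - a) ^ Suc m) has_real_derivative real (Suc m) * (t - a) ^ m) (at t within S)"
    by (rule DERIV_cong[OF DERIV_power_Suc[OF DERIV_diff[OF DERIV_ident DERIV_const]]]) simp
  have F: "taylor_poly D (Suc m) t a - D 0 a
      = frozen_taylor_error D m a t + c / fact (Suc m) * (a - t) ^ Suc m"
    by (simp add: frozen_taylor_error_def taylor_poly_Suc c_def algebra_simps diff_divide_distrib)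
  have alg: "(c * (a - t) ^ m / fact m * (t - a) ^ Suc m - K * (real (Suc m) * (t - a) ^ m))
      / ((t - a) ^ Suc m * (t - a) ^ Suc m)
      = - real (Suc m) * (K + c / fact (Suc m) * (a - t) ^ Suc m) / (t - a) ^ Suc (Suc m)" for K
  proof -
    define u where "u = t - a"
    define N :: real where "N = real (Suc m)"
    have eqs: "t - a = u" "a - t = - u"
      by (simp_all add: u_def)
    have "u \<noteq> 0" "u ^ m \<noteq> 0" "N \<noteq> 0"
      using \<open>t \<noteq> a\<close> by (simp_all add: u_def N_def)
    then show ?thesis
      unfolding eqs fact_Suc unfolding N_def[symmetric] power_Suc power_minus[of u m]
      by (simp add: field_simps)
  qed
  show ?thesis
    by (rule DERIV_cong[OF DERIV_divide[OF dK dP]])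
      (use \<open>t \<noteq> a\<close> in \<open>simp_all only: alg F, simp\<close>)
qed

lemma Rolle_real_deriv:
  fixes G G' :: "real \<Rightarrow> real"
  assumes "y < b" and "G y = G b" and "continuous_on {y..b} G"
    and "\<And>t. y < t \<Longrightarrow> t < b \<Longrightarrow> (G has_real_derivative G' t) (at t)"
  shows "\<exists>c\<in>{y<..<b}. G' c = 0"
proof -
  obtain c where "y < c" "c < b" "(\<lambda>v. G' c * v) = (\<lambda>v. 0)"
    using Rolle_deriv[of y b G "\<lambda>t v. G' t * v"] assms by (auto simp: has_field_derivative_def)
  then show ?thesis
    by (metis greaterThanLessThan_iff mult_cancel_left1)
qed

lemma exists_deriv_zero_Ioc_nonneg:
  fixes H H' :: "real \<Rightarrow> real"
  assumes "a < b" and cont: "continuous_on {a..b} H" and "H a = 0"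
    and deriv: "\<And>t. t \<in> {a<..b} \<Longrightarrow> (H has_real_derivative H' t) (at t within {a..b})"
    and "H b * H' b \<le> 0" and nonneg: "H b \<ge> 0"
  shows "\<exists>c\<in>{a<..b}. H' c = 0"
proof -
  have deriv_at: "(H has_real_derivative H' t) (at t)" if "y < t" "t < b" "a \<le> y" for y t
    using deriv[of t] that by (simp add: at_within_Icc_at)
  have Rolle_from: "\<exists>c\<in>{a<..b}. H' c = 0" if "a \<le> y" "y < b" "H y = H b" for y
  proof -
    have "continuous_on {y..b} H"
      using cont by (rule continuous_on_subset) (use \<open>a \<le> y\<close> in auto)
    then show ?thesis
      using Rolle_real_deriv[of y b H H'] deriv_at that by fastforce
  qed
  consider "H' b = 0" | "H b = 0" | "H b > 0" "H' b < 0"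
    using nonneg \<open>H b * H' b \<le> 0\<close> by (fastforce simp: mult_le_0_iff)
  then show ?thesis
  proof cases
    case 1
    then show ?thesis
      using \<open>a < b\<close> by auto
  next
    case 2
    then show ?thesis
      using Rolle_from[of a] \<open>a < b\<close> \<open>H a = 0\<close> by simp
  next
    case 3
    obtain d where "d > 0" and d: "\<And>h. h > 0 \<Longrightarrow> b - h \<in> {a..b} \<Longrightarrow> h < d \<Longrightarrow> H b < H (b - h)"
      using has_real_derivative_neg_dec_left[OF deriv \<open>H' b < 0\<close>] \<open>a < b\<close> by auto
    define h where "h = min (d / 2) ((b - a) / 2)"
    have "0 < h" "h < d" "2 * h \<le> b - a"
      using \<open>d > 0\<close> \<open>a < b\<close> by (auto simp: h_def min_def)
    define x where "x = b - h"
    have "a < x" "x < b" "H b < H x"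
      using d[of h] \<open>0 < h\<close> \<open>h < d\<close> \<open>2 * h \<le> b - a\<close> by (auto simp: x_def)
    moreover have "continuous_on {a..x} H"
      using cont by (rule continuous_on_subset) (use \<open>x < b\<close> in auto)
    ultimately obtain y where "a \<le> y" "y \<le> x" "H y = H b"
      using IVT'[of H a "H b" x] \<open>H a = 0\<close> nonneg by auto
    then show ?thesis
      using Rolle_from[of y] \<open>x < b\<close> by simp
  qed
qed

lemma exists_deriv_zero_Ioc:
  fixes H H' :: "real \<Rightarrow> real"
  assumes "a < b" and "continuous_on {a..b} H" and "H a = 0"
    and "\<And>t. t \<in> {a<..b} \<Longrightarrow> (H has_real_derivative H' t) (at t within {a..b})"
    and "H b * H' b \<le> 0"
  shows "\<exists>c\<in>{a<..b}. H' c = 0"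
proof (cases "H b \<ge> 0")
  case True
  then show ?thesis
    using exists_deriv_zero_Ioc_nonneg assms by blast
next
  case False
  have "\<exists>c\<in>{a<..b}. - H' c = 0"
    using False assms by (intro exists_deriv_zero_Ioc_nonneg[of a b "\<lambda>x. - H x"])
      (auto intro: continuous_on_minus DERIV_minus)
  then show ?thesis
    by simp
qed

lemma taylor_poly_difference_quotient:
  fixes D :: "nat \<Rightarrow> real \<Rightarrow> real"
  assumes "x \<noteq> y"
  shows "(D 0 x - taylor_poly D n x y) / (x - y)
           = (\<Sum>i=1..n. (-1) ^ (i + 1) / fact i * (x - y) ^ (i - 1) * D i x)"
proof -
  have "taylor_poly D n x y = D 0 x + (\<Sum>i=1..n. D i x / fact i * (y - x) ^ i)"
    by (simp add: taylor_poly_def atMost_atLeast0 sum.atLeast_Suc_atMost)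
  moreover have "D i x / fact i * (y - x) ^ i
      = - ((-1) ^ (i + 1) / fact i * (x - y) ^ (i - 1) * D i x * (x - y))"
    if "i \<in> {1..n}" for i
  proof -
    have "(y - x) ^ i = (-1) ^ i * (x - y) ^ i"
      by (metis minus_diff_eq power_minus)
    also have "\<dots> = (-1) ^ i * ((x - y) ^ (i - 1) * (x - y))"
      using that by (cases i) (simp_all add: ac_simps)
    finally show ?thesis
      by simp
  qed
  then have "(\<Sum>i=1..n. D i x / fact i * (y - x) ^ i)
      = - ((\<Sum>i=1..n. (-1) ^ (i + 1) / fact i * (x - y) ^ (i - 1) * D i x) * (x - y))"
    unfolding sum_distrib_right sum_negf[symmetric] by (rule sum.cong[OF refl])
  ultimately show ?thesis
    using assms by simp
qed

lemma continuous_on_frozen_taylor_error_quotient: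
  fixes D :: "nat \<Rightarrow> real \<Rightarrow> real"
  assumes "a < b"
    and diff: "\<And>k t. k \<le> m \<Longrightarrow> t \<in> {a..b} \<Longrightarrow> (D k has_real_derivative D (Suc k) t) (at t within {a..b})"
  shows "continuous_on {a..b} (\<lambda>x. frozen_taylor_error D m a x / (x - a) ^ Suc m)"
  unfolding continuous_on_eq_continuous_within
proof
  fix t
  assume t: "t \<in> {a..b}"
  show "continuous (at t within {a..b}) (\<lambda>x. frozen_taylor_error D m a x / (x - a) ^ Suc m)"
  proof (cases "t = a")
    case True
    have "((\<lambda>x. frozen_taylor_error D m a x / (x - a) ^ Suc m) \<longlongrightarrow> 0) (at_right a)"
      by (rule smalloD_tendsto[OF frozen_taylor_error_smallo[where D=D, OF assms]])
    then show ?thesis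
      using True \<open>a < b\<close> by (simp add: continuous_within at_within_Icc_at_right)
  next
    case False
    then show ?thesis
      using t diff by (blast intro: DERIV_continuous has_real_derivative_frozen_taylor_error_quotient)
  qed
qed

theorem mainTheorem14:
  fixes f :: "real \<Rightarrow> real" and D :: "nat \<Rightarrow> real \<Rightarrow> real" and a b :: real and n :: nat
  assumes n: "n \<ge> 1" and ab: "a < b"
    and D0: "\<forall>t\<in>{a..b}. D 0 t = f t"
    and diff: "\<forall>m<n. \<forall>t\<in>{a..b}. (D m has_real_derivative D (Suc m) t) (at t within {a..b})"
    and hyp: "(D n a * (a - b) ^ n / fact n + (taylor_poly D (n - 1) b a - f a)) *
              (D n b * (a - b) ^ n / fact n + (taylor_poly D (n - 1) b a - f a)) \<ge> 0"
  shows "\<exists>\<eta>\<in>{a<..b}. (f \<eta> - f a) / (\<eta> - a) =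
           (\<Sum>i=1..n. (-1) ^ (i + 1) / fact i * (\<eta> - a) ^ (i - 1) * D i \<eta>)"
proof -
  obtain m where m: "n = Suc m"
    using n by (cases n) auto
  have diff': "\<And>k t. k \<le> m \<Longrightarrow> t \<in> {a..b} \<Longrightarrow> (D k has_real_derivative D (Suc k) t) (at t within {a..b})"
    using diff m by auto
  have fa: "f a = D 0 a"
    using D0 ab by auto
  define H where "H x = frozen_taylor_error D m a x / (x - a) ^ Suc m" for x
  define H' where "H' t = - real (Suc m) * (taylor_poly D (Suc m) t a - D 0 a) / (t - a) ^ Suc (Suc m)" for t
  have "frozen_taylor_error D m a b = D n a * (a - b) ^ n / fact n + (taylor_poly D (n - 1) b a - f a)"
      "taylor_poly D (Suc m) b a - D 0 a = D n b * (a - b) ^ n / fact n + (taylor_poly D (n - 1) b a - f a)"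
    by (simp_all add: frozen_taylor_error_def taylor_poly_Suc m fa)
  then have "H b * H' b = - real (Suc m) * ((D n a * (a - b) ^ n / fact n + (taylor_poly D (n - 1) b a - f a)) *
              (D n b * (a - b) ^ n / fact n + (taylor_poly D (n - 1) b a - f a)))
      / ((b - a) ^ Suc m * (b - a) ^ Suc (Suc m))"
    by (simp add: H_def H'_def)
  also have "\<dots> \<le> 0"
    using hyp ab by (intro divide_nonpos_pos mult_nonpos_nonneg) simp_all
  finally have sign: "H b * H' b \<le> 0" .
  have cont: "continuous_on {a..b} H"
    unfolding H_def using continuous_on_frozen_taylor_error_quotient[where D=D, OF ab diff'] .
  have deriv: "(H has_real_derivative H' t) (at t within {a..b})" if "t \<in> {a<..b}" for t
    unfolding H_def H'_def using that diff' by (intro has_real_derivative_frozen_taylor_error_quotient) auto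
  obtain \<eta> where \<eta>: "\<eta> \<in> {a<..b}" and "H' \<eta> = 0"
    using exists_deriv_zero_Ioc[OF ab cont _ deriv sign] by (auto simp: H_def)
  then have "taylor_poly D n \<eta> a = f a"
    by (simp add: H'_def m fa)
  then show ?thesis
    using taylor_poly_difference_quotient[of \<eta> a D n] D0 \<eta> by auto
qed

end
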